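(* Let $a,b,c,n,m,p,q,r$ be positive integers with $n>1$ and $r>1$, and let $$M=\begin{pmatrix} 1 & a & b\\ c & n & m\\ p & q & r\end{pmatrix}.$$ If $\mathrm{Cat}(M)\neq\emptyset$, then $n\geq ac+1$, $r\geq bp+1$, $m\geq bc$ and $q\geq ap$.
   Context: For an $n\times n$ matrix $M=(m_{ij})$ with entries in the natural numbers, $\mathrm{Cat}(M)$ denotes the collection of categories $A$ with exactly $n$ distinct objects $x_1,\dots,x_n$ such that $|A(x_i,x_j)|=m_{ij}$ for all $i,j$, where $A(x_i,x_j)$ is the set of morphisms from $x_i$ to $x_j$. *)

theory Defs
  imports Main
begin

text \<open>A (small) category with objects 0,...,n-1, in hom-set presentation:
  Hom i j is the set of morphisms from object i to object j,
  cmp i j k g f is the composite g o f of f : i -> j and g : j -> k,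
  ident i is the identity of object i.\<close>

definition category_on ::
  "nat \<Rightarrow> (nat \<Rightarrow> nat \<Rightarrow> 'm set) \<Rightarrow> (nat \<Rightarrow> nat \<Rightarrow> nat \<Rightarrow> 'm \<Rightarrow> 'm \<Rightarrow> 'm)
    \<Rightarrow> (nat \<Rightarrow> 'm) \<Rightarrow> bool" where
  "category_on n Hom cmp ident \<longleftrightarrow>
     (\<forall>i<n. ident i \<in> Hom i i) \<and>
     (\<forall>i<n. \<forall>j<n. \<forall>k<n. \<forall>f\<in>Hom i j. \<forall>g\<in>Hom j k. cmp i j k g f \<in> Hom i k) \<and>
     (\<forall>i<n. \<forall>j<n. \<forall>f\<in>Hom i j. cmp i j j (ident j) f = f) \<and>
     (\<forall>i<n. \<forall>j<n. \<forall>f\<in>Hom i j. cmp i i j f (ident i) = f) \<and>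
     (\<forall>i<n. \<forall>j<n. \<forall>k<n. \<forall>l<n. \<forall>f\<in>Hom i j. \<forall>g\<in>Hom j k. \<forall>h\<in>Hom k l.
        cmp i k l h (cmp i j k g f) = cmp i j l (cmp j k l h g) f)"

definition in_Cat ::
  "nat \<Rightarrow> (nat \<Rightarrow> nat \<Rightarrow> nat) \<Rightarrow> (nat \<Rightarrow> nat \<Rightarrow> 'm set) \<Rightarrow> (nat \<Rightarrow> nat \<Rightarrow> nat \<Rightarrow> 'm \<Rightarrow> 'm \<Rightarrow> 'm)
    \<Rightarrow> (nat \<Rightarrow> 'm) \<Rightarrow> bool" where
  "in_Cat n M Hom cmp ident \<longleftrightarrow>
     category_on n Hom cmp ident \<and> (\<forall>i<n. \<forall>j<n. card (Hom i j) = M i j)"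

end

theory Submission
  imports Defs
begin

text \<open>Object 0 has only its identity as endomorphism, so every composite \<open>j \<rightarrow> 0 \<rightarrow> j\<close>
  collapses to the identity of 0. Hence once there are arrows \<open>0 \<rightarrow> j\<close> and \<open>k \<rightarrow> 0\<close>, composition
  \<open>Hom j 0 \<times> Hom 0 k \<rightarrow> Hom j k\<close> is injective, both factors being recovered by composing with
  them; this gives \<open>m \<ge> bc\<close> and \<open>q \<ge> ap\<close>. For \<open>j = k\<close> the identity of \<open>j\<close> is moreover not such
  a composite: otherwise \<open>j\<close> would be a retract of 0 and would itself have only the identity
  as endomorphism, contradicting \<open>n, r > 1\<close>. This gives the two strict bounds.\<close>

locale category =
  fixes N :: nat
    and Hom :: "nat \<Rightarrow> nat \<Rightarrow> 'm set"
    and cmp :: "nat \<Rightarrow> nat \<Rightarrow> nat \<Rightarrow> 'm \<Rightarrow> 'm \<Rightarrow> 'm"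
    and ident :: "nat \<Rightarrow> 'm"
  assumes category: "category_on N Hom cmp ident"
begin

lemma ident_in_Hom: "i < N \<Longrightarrow> ident i \<in> Hom i i"
  using category unfolding category_on_def by simp

lemma comp_in_Hom:
  "\<lbrakk>i < N; j < N; k < N; f \<in> Hom i j; g \<in> Hom j k\<rbrakk> \<Longrightarrow> cmp i j k g f \<in> Hom i k"
  using category unfolding category_on_def by simp

lemma comp_ident_left: "\<lbrakk>i < N; j < N; f \<in> Hom i j\<rbrakk> \<Longrightarrow> cmp i j j (ident j) f = f"
  using category unfolding category_on_def by simp

lemma comp_ident_right: "\<lbrakk>i < N; j < N; f \<in> Hom i j\<rbrakk> \<Longrightarrow> cmp i i j f (ident i) = f"
  using category unfolding category_on_def by simp

lemma comp_assoc:
  "\<lbrakk>i < N; j < N; k < N; l < N; f \<in> Hom i j; g \<in> Hom j k; h \<in> Hom k l\<rbrakk>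
    \<Longrightarrow> cmp i k l h (cmp i j k g f) = cmp i j l (cmp j k l h g) f"
  using category unfolding category_on_def by simp

lemma comp_through_trivial_object:
  assumes "Hom x x = {ident x}" "x < N" "j < N" "f \<in> Hom x j" "g \<in> Hom j x"
  shows "cmp x j x g f = ident x"
  using comp_in_Hom[of x j x f g] assms by auto

lemma inj_on_comp_through_trivial_object:
  assumes triv: "Hom x x = {ident x}" and objs: "x < N" "j < N" "k < N"
    and u: "u \<in> Hom x j" and v: "v \<in> Hom k x"
  shows "inj_on (\<lambda>(g, f). cmp j x k f g) (Hom j x \<times> Hom x k)"
proof (rule inj_onI, clarify)
  have recover_left: "cmp j k x v (cmp j x k f g) = g" if "g \<in> Hom j x" "f \<in> Hom x k" for g f
  proof -
    have "cmp j k x v (cmp j x k f g) = cmp j x x (cmp x k x v f) g"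
      using comp_assoc[of j x k x g f v] objs that v by simp
    also have "\<dots> = g"
      using comp_through_trivial_object[OF triv] comp_ident_left[of j x g] objs that v by simp
    finally show ?thesis .
  qed
  have recover_right: "cmp x j k (cmp j x k f g) u = f" if "g \<in> Hom j x" "f \<in> Hom x k" for g f
  proof -
    have "cmp x j k (cmp j x k f g) u = cmp x x k f (cmp x j x g u)"
      using comp_assoc[of x j x k u g f] objs that u by simp
    also have "\<dots> = f"
      using comp_through_trivial_object[OF triv] comp_ident_right[of x k f] objs that u by simp
    finally show ?thesis .
  qed
  fix g f g' f'
  assume "g \<in> Hom j x" "f \<in> Hom x k" "g' \<in> Hom j x" "f' \<in> Hom x k"
    and "cmp j x k f g = cmp j x k f' g'"
  then show "g = g' \<and> f = f'"
    using recover_left recover_right by metis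
qed

lemma card_Hom_through_trivial_object:
  assumes triv: "Hom x x = {ident x}" and objs: "x < N" "j < N" "k < N"
    and "Hom x j \<noteq> {}" "Hom k x \<noteq> {}" and fin: "finite (Hom j k)"
  shows "card (Hom j x) * card (Hom x k) \<le> card (Hom j k)"
proof -
  obtain u v where "u \<in> Hom x j" "v \<in> Hom k x"
    using assms(5,6) by blast
  note inj = inj_on_comp_through_trivial_object[OF triv objs this]
  have "card (Hom j x) * card (Hom x k) = card (Hom j x \<times> Hom x k)"
    by (simp add: card_cartesian_product)
  also have "\<dots> \<le> card (Hom j k)"
    by (rule card_inj_on_le[OF inj _ fin]) (use comp_in_Hom[of j x k] objs in auto)
  finally show ?thesis .
qed

lemma retract_of_trivial_object:
  assumes triv: "Hom x x = {ident x}" and objs: "x < N" "j < N"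
    and g: "g \<in> Hom j x" and f: "f \<in> Hom x j" and retract: "cmp j x j f g = ident j"
  shows "Hom j j = {ident j}"
proof -
  have "h = ident j" if h: "h \<in> Hom j j" for h
  proof -
    have hf: "cmp x j j h f \<in> Hom x j"
      using comp_in_Hom[of x j j f h] objs f h by simp
    have "cmp x j j h f = cmp x j j (cmp j x j f g) (cmp x j j h f)"
      using retract comp_ident_left[of x j] objs hf by simp
    also have "\<dots> = cmp x x j f (cmp x j x g (cmp x j j h f))"
      using comp_assoc[of x j x j _ g f] objs hf g f by simp
    also have "\<dots> = f"
      using comp_through_trivial_object[OF triv objs hf g] comp_ident_right[of x j f] objs f
      by simp
    finally have hf_eq: "cmp x j j h f = f" .
    have "h = cmp j j j h (cmp j x j f g)"
      using retract comp_ident_right[of j j h] objs h by simp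
    also have "\<dots> = cmp j x j (cmp x j j h f) g"
      using comp_assoc[of j x j j g f h] objs g f h by simp
    finally show ?thesis
      using hf_eq retract by simp
  qed
  then show ?thesis
    using ident_in_Hom[of j] objs by blast
qed

lemma card_endo_through_trivial_object:
  assumes triv: "Hom x x = {ident x}" and objs: "x < N" "j < N"
    and fin: "finite (Hom j j)" and nontrivial: "card (Hom j j) > 1"
  shows "card (Hom j x) * card (Hom x j) + 1 \<le> card (Hom j j)"
proof (cases "Hom x j = {} \<or> Hom j x = {}")
  case True
  then show ?thesis
    using nontrivial by auto
next
  case False
  then obtain u v where u: "u \<in> Hom x j" and v: "v \<in> Hom j x"
    by blast
  let ?comp = "\<lambda>(g, f). cmp j x j f g"
  let ?C = "?comp ` (Hom j x \<times> Hom x j)"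
  have C_sub: "?C \<subseteq> Hom j j"
    using comp_in_Hom[of j x j] objs by auto
  have ident_notin: "ident j \<notin> ?C"
  proof
    assume "ident j \<in> ?C"
    then have "Hom j j = {ident j}"
      using retract_of_trivial_object[OF triv objs] by auto
    with nontrivial show False
      by simp
  qed
  have "card (Hom j x) * card (Hom x j) = card ?C"
    using card_image[OF inj_on_comp_through_trivial_object[OF triv objs objs(2) u v]]
    by (simp add: card_cartesian_product)
  also have "\<dots> + 1 = card (insert (ident j) ?C)"
    using ident_notin finite_subset[OF C_sub fin] by simp
  also have "\<dots> \<le> card (Hom j j)"
    using card_mono[OF fin] C_sub ident_in_Hom[of j] objs by simp
  finally show ?thesis .
qed

end

theorem mainTheorem3:
  fixes a b c n m p q r :: nat
    and Hom :: "nat \<Rightarrow> nat \<Rightarrow> 'm set"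
    and cmp :: "nat \<Rightarrow> nat \<Rightarrow> nat \<Rightarrow> 'm \<Rightarrow> 'm \<Rightarrow> 'm"
    and ident :: "nat \<Rightarrow> 'm"
  assumes "a > 0" "b > 0" "c > 0" "n > 1" "m > 0" "p > 0" "q > 0" "r > 1"
    and "in_Cat 3 (\<lambda>i j. [[1, a, b], [c, n, m], [p, q, r]] ! i ! j) Hom cmp ident"
  shows "n \<ge> a * c + 1 \<and> r \<ge> b * p + 1 \<and> m \<ge> b * c \<and> q \<ge> a * p"
proof -
  interpret category 3 Hom cmp ident
    using assms(9) unfolding in_Cat_def by unfold_locales simp
  have card: "card (Hom 0 0) = 1" "card (Hom 0 1) = a" "card (Hom 0 2) = b"
    "card (Hom 1 0) = c" "card (Hom 1 1) = n" "card (Hom 1 2) = m"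
    "card (Hom 2 0) = p" "card (Hom 2 1) = q" "card (Hom 2 2) = r"
    using assms(9) unfolding in_Cat_def by (auto simp: numeral_eq_Suc)
  then have finite_nonempty: "finite (Hom i j) \<and> Hom i j \<noteq> {}" if "i < 3" "j < 3" for i j
    using that assms(1-8) card_gt_0_iff[of "Hom i j"] by (auto simp: less_Suc_eq numeral_eq_Suc)
  have triv: "Hom 0 0 = {ident 0}"
    using card(1) ident_in_Hom[of 0] by (metis card_1_singletonE singletonD zero_less_numeral)
  have "a * c + 1 \<le> n" "b * p + 1 \<le> r"
    using card_endo_through_trivial_object[OF triv, of 1] card_endo_through_trivial_object[OF triv, of 2]
      finite_nonempty card assms(4,8) by (simp_all add: mult.commute)
  moreover have "b * c \<le> m" "a * p \<le> q"
    using card_Hom_through_trivial_object[OF triv, of 1 2] card_Hom_through_trivial_object[OF triv, of 2 1]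
      finite_nonempty card by (simp_all add: mult.commute)
  ultimately show ?thesis
    by simp
qed

end
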